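(* Let $n\ge2$, $k\in\mathbb{R}$, and $d\ge0$ with $d<\pi\sqrt{(n-1)/k}$ if $k>0$. Set $\theta=\sqrt{|k|/(n-1)}\,d$ and $K=d^2k/(n-1)$, and consider the LQ problem $(A,B,Q,1)$ on $\mathbb{R}^n$ with $$A=\mathbb{0}_n,\qquad B=\mathbb{1}_n,\qquad Q=\begin{pmatrix}K\mathbb{1}_{n-1}&\mathbb{0}_{n-1,1}\\ \mathbb{0}_{1,n-1}&\mathbb{0}_1\end{pmatrix}.$$ Then $1<t^*$ for this problem and its distortion coefficients satisfy, for all $\tau\in[0,1]$, $$\beta_\tau^{(A,B,Q,1)}=\begin{cases}\tau\big(\frac{\sin(\tau\theta)}{\sin\theta}\big)^{n-1}& k>0,\\ \tau^n & k=0,\\ \tau\big(\frac{\sinh(\tau\theta)}{\sinh\theta}\big)^{n-1}& k<0,\end{cases}$$ (with the convention that for $k\neq0$, $d=0$ the ratio is interpreted as its limit $\tau^{n-1}$), i.e. they equal the distortion coefficients $\beta^{k,n}_\tau(x,y)$ of points $x,y$ at distance $d_g(x,y)=d$ in an $n$-dimensional Riemannian space form with constant Ricci curvature $k$.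
   Context: $\mathbb 1_i$ is the $i\times i$ identity, $\mathbb 0_j$ the $j\times j$ zero matrix, $\mathbb 0_{i,j}$ the $i\times j$ zero matrix. For an LQ problem $(A,B,Q,T)$ ($A\in\mathbb{R}^{n\times n}$, $B\in\mathbb{R}^{n\times m}$, $Q$ symmetric): admissible curves satisfy $\dot\gamma=A\gamma+Bu$, $u\in L^2$; action $\mathcal A^{0,T}(\gamma)=\frac12\int_0^T(|u|^2-\gamma^*Q\gamma)d\tau$ ($+\infty$ if not admissible); a curve is optimal if it minimizes $\mathcal A^{0,T}$ with fixed endpoints. Hamiltonian system $\dot p=-A^*p-Qx$, $\dot x=BB^*p+Ax$; $t>0$ is conjugate if a nontrivial solution has $x(0)=x(t)=0$; $t^*$ is the first conjugate time. Distortion coefficients (for $T<t^*$): $Z_\tau(x,F)=\{\gamma(\tau):\gamma\text{ optimal on }[0,T],\gamma(0)=x,\gamma(T)\in F\}$, $\beta_\tau(x,y)=\limsup_{r\to0^+}\mathscr L^n(Z_\tau(x,B_r(y)))/\mathscr L^n(B_r(y))$; they are independent of $(x,y)$ and denoted $\beta^{(A,B,Q,T)}_\tau$. *)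

theory Defs
  imports "HOL-Analysis.Analysis"
begin

text \<open>u is an L^2 control on [0,T] steering gamma: gamma' = A gamma + B u (in integral form,
  i.e. gamma is absolutely continuous and solves the ODE a.e.).\<close>
definition lq_control ::
  "real^'n^'n \<Rightarrow> real^'m^'n \<Rightarrow> real \<Rightarrow> (real \<Rightarrow> real^'n) \<Rightarrow> (real \<Rightarrow> real^'m) \<Rightarrow> bool" where
  "lq_control A B T \<gamma> u \<longleftrightarrow>
     set_borel_measurable lborel {0..T} u \<and>
     set_integrable lborel {0..T} (\<lambda>t. (norm (u t))\<^sup>2) \<and>
     (\<forall>t\<in>{0..T}. ((\<lambda>s. A *v \<gamma> s + B *v u s) has_integral (\<gamma> t - \<gamma> 0)) {0..t})"

definition lq_admissible ::
  "real^'n^'n \<Rightarrow> real^'m^'n \<Rightarrow> real \<Rightarrow> (real \<Rightarrow> real^'n) \<Rightarrow> bool" where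
  "lq_admissible A B T \<gamma> \<longleftrightarrow> (\<exists>u. lq_control A B T \<gamma> u)"

text \<open>Action: 1/2 int_0^T (|u|^2 - gamma^* Q gamma), +infinity if not admissible.
  (If several controls produce gamma, the cheapest one is taken; for injective B, e.g.
  B = identity, the control is unique a.e.)\<close>
definition lq_action ::
  "real^'n^'n \<Rightarrow> real^'m^'n \<Rightarrow> real^'n^'n \<Rightarrow> real \<Rightarrow> (real \<Rightarrow> real^'n) \<Rightarrow> ereal" where
  "lq_action A B Q T \<gamma> =
     (INF u \<in> {u. lq_control A B T \<gamma> u}.
        ereal ((1/2) * (LINT t:{0..T}|lborel. (norm (u t))\<^sup>2 - \<gamma> t \<bullet> (Q *v \<gamma> t))))"

definition lq_optimal ::
  "real^'n^'n \<Rightarrow> real^'m^'n \<Rightarrow> real^'n^'n \<Rightarrow> real \<Rightarrow> (real \<Rightarrow> real^'n) \<Rightarrow> bool" where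
  "lq_optimal A B Q T \<gamma> \<longleftrightarrow>
     lq_admissible A B T \<gamma> \<and>
     (\<forall>\<eta>. \<eta> 0 = \<gamma> 0 \<longrightarrow> \<eta> T = \<gamma> T \<longrightarrow> lq_action A B Q T \<gamma> \<le> lq_action A B Q T \<eta>)"

definition lq_hamiltonian_solution ::
  "real^'n^'n \<Rightarrow> real^'m^'n \<Rightarrow> real^'n^'n \<Rightarrow> (real \<Rightarrow> real^'n) \<Rightarrow> (real \<Rightarrow> real^'n) \<Rightarrow> bool" where
  "lq_hamiltonian_solution A B Q p x \<longleftrightarrow>
     (\<forall>s. (p has_vector_derivative (- (transpose A *v p s) - Q *v x s)) (at s)) \<and>
     (\<forall>s. (x has_vector_derivative ((B ** transpose B) *v p s + A *v x s)) (at s))"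

definition lq_conjugate_time ::
  "real^'n^'n \<Rightarrow> real^'m^'n \<Rightarrow> real^'n^'n \<Rightarrow> real \<Rightarrow> bool" where
  "lq_conjugate_time A B Q t \<longleftrightarrow> t > 0 \<and>
     (\<exists>p x. lq_hamiltonian_solution A B Q p x \<and> \<not> (\<forall>s. p s = 0 \<and> x s = 0) \<and>
            x 0 = 0 \<and> x t = 0)"

text \<open>First conjugate time t^* (= +infinity if there is none).\<close>
definition lq_first_conjugate_time ::
  "real^'n^'n \<Rightarrow> real^'m^'n \<Rightarrow> real^'n^'n \<Rightarrow> ereal" where
  "lq_first_conjugate_time A B Q = Inf (ereal ` {t. lq_conjugate_time A B Q t})"

definition lq_Z ::
  "real^'n^'n \<Rightarrow> real^'m^'n \<Rightarrow> real^'n^'n \<Rightarrow> real \<Rightarrow> real \<Rightarrow> real^'n \<Rightarrow> (real^'n) set \<Rightarrow> (real^'n) set" where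
  "lq_Z A B Q T \<tau> x F = {\<gamma> \<tau> | \<gamma>. lq_optimal A B Q T \<gamma> \<and> \<gamma> 0 = x \<and> \<gamma> T \<in> F}"

definition lq_distortion ::
  "real^'n^'n \<Rightarrow> real^'m^'n \<Rightarrow> real^'n^'n \<Rightarrow> real \<Rightarrow> real \<Rightarrow> real^'n \<Rightarrow> real^'n \<Rightarrow> ereal" where
  "lq_distortion A B Q T \<tau> x y =
     Limsup (at_right 0) (\<lambda>r. ereal (measure lebesgue (lq_Z A B Q T \<tau> x (ball y r))
                                      / measure lebesgue (ball y r)))"

definition space_form_distortion :: "nat \<Rightarrow> real \<Rightarrow> real \<Rightarrow> real \<Rightarrow> real" where
  "space_form_distortion n k d \<tau> =
     (let \<theta> = sqrt (\<bar>k\<bar> / (real n - 1)) * d in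
      if k = 0 \<or> d = 0 then \<tau> ^ n
      else if k > 0 then \<tau> * (sin (\<tau> * \<theta>) / sin \<theta>) ^ (n - 1)
      else \<tau> * (sinh (\<tau> * \<theta>) / sinh \<theta>) ^ (n - 1))"

end

theory Submission
  imports Defs
begin

(*
  With A = 0, B = 1 and Q = diag c, the LQ problem splits into scalar problems: minimise
  int_0^1 (h'^2 - c h^2) with fixed ends, where c = K on n - 1 coordinates and c = 0 on the last.
  If c < pi^2, the solution h of h'' = - c h with the prescribed ends is the strict minimiser:
  for a competitor h + e the cross term integrates to zero, and Wirtinger's inequality
  (c + eps) int e^2 <= int e'^2, valid as long as c + eps < pi^2 (Picone's identity with a
  cotangent solution of the Riccati equation), leaves eps int e^2 >= 0.
  So the optimal curves are explicit, the map y |-> gamma(tau) for fixed gamma(0) is affine and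
  diagonal with factors sn_c(tau) / sn_c(1), and the distortion coefficient is their product:
  tau from the free coordinate and (sin(tau theta) / sin theta)^(n-1) (resp. sinh) from the others.
  The Jacobi fields of a coordinate vanishing at 0 are multiples of sn_c, which has no zero in
  (0, pi / sqrt c), so the first conjugate time is at least min (pi / sqrt c) > 1.
*)

section \<open>Primitives of integrable functions\<close>

(* F is absolutely continuous on [a,b] with derivative f, in the integral form used by lq_control. *)
definition primitive_on :: "(real \<Rightarrow> real) \<Rightarrow> (real \<Rightarrow> real) \<Rightarrow> real \<Rightarrow> real \<Rightarrow> bool" where
  "primitive_on F f a b \<longleftrightarrow>
     set_integrable lborel {a..b} f \<and> (\<forall>t\<in>{a..b}. F t = F a + (LINT s:{a..t}|lborel. f s))"

lemma primitive_on_integrable: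
  "primitive_on F f a b \<Longrightarrow> set_integrable lborel {a..b} f"
  unfolding primitive_on_def by blast

lemma primitive_onD:
  "primitive_on F f a b \<Longrightarrow> t \<in> {a..b} \<Longrightarrow> F t = F a + (LINT s:{a..t}|lborel. f s)"
  unfolding primitive_on_def by blast

lemma
  fixes F G :: "real \<Rightarrow> real"
  assumes Fi: "integrable lborel F" and Gi: "integrable lborel G"
  shows integrable_lborel_pair_mult: "integrable (lborel \<Otimes>\<^sub>M lborel) (\<lambda>(x, y). F x * G y)"
    and integral_lborel_pair_mult:
      "integral\<^sup>L (lborel \<Otimes>\<^sub>M lborel) (\<lambda>(x, y). F x * G y) = integral\<^sup>L lborel F * integral\<^sup>L lborel G"
proof -
  have [measurable]: "F \<in> borel_measurable lborel" "G \<in> borel_measurable lborel"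
    using Fi Gi by auto
  show i: "integrable (lborel \<Otimes>\<^sub>M lborel) (\<lambda>(x, y). F x * G y)"
  proof (rule lborel_pair.Fubini_integrable)
    show "integrable lborel (\<lambda>x. \<integral>y. norm (case (x, y) of (x, y) \<Rightarrow> F x * G y) \<partial>lborel)"
      by (simp add: abs_mult Fi Gi)
    show "AE x in lborel. integrable lborel (\<lambda>y. case (x, y) of (x, y) \<Rightarrow> F x * G y)"
      using Gi by simp
  qed measurable
  show "integral\<^sup>L (lborel \<Otimes>\<^sub>M lborel) (\<lambda>(x, y). F x * G y) = integral\<^sup>L lborel F * integral\<^sup>L lborel G"
    using lborel_pair.integral_fst[of "\<lambda>x y. F x * G y"] i by simp
qed

lemma integral_mult_split_diagonal:
  fixes F G :: "real \<Rightarrow> real"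
  assumes Fi: "integrable lborel F" and Gi: "integrable lborel G"
  defines "L \<equiv> \<lambda>x. F x * (\<integral>y. indicator {..x} y * G y \<partial>lborel)"
    and "U \<equiv> \<lambda>y. (\<integral>x. indicator {..<y} x * F x \<partial>lborel) * G y"
  shows "integrable lborel L" and "integrable lborel U"
    and "integral\<^sup>L lborel F * integral\<^sup>L lborel G = integral\<^sup>L lborel L + integral\<^sup>L lborel U"
proof -
  define P where "P = (\<lambda>(x::real, y::real). F x * G y)"
  have Pi: "integrable (lborel \<Otimes>\<^sub>M lborel) P"
    unfolding P_def using Fi Gi by (rule integrable_lborel_pair_mult)
  then have Pm[measurable]: "P \<in> borel_measurable (lborel \<Otimes>\<^sub>M lborel)" by auto
  define P1 where "P1 = (\<lambda>(x::real, y::real). P (x, y) * (if y \<le> x then 1 else 0))"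
  define P2 where "P2 = (\<lambda>(x::real, y::real). P (x, y) * (if x < y then 1 else 0))"
  have P1m[measurable]: "P1 \<in> borel_measurable (lborel \<Otimes>\<^sub>M lborel)" unfolding P1_def by measurable
  have P2m[measurable]: "P2 \<in> borel_measurable (lborel \<Otimes>\<^sub>M lborel)" unfolding P2_def by measurable
  have P1i: "integrable (lborel \<Otimes>\<^sub>M lborel) P1"
    by (rule Bochner_Integration.integrable_bound[OF Pi P1m]) (auto simp: P1_def)
  have P2i: "integrable (lborel \<Otimes>\<^sub>M lborel) P2"
    by (rule Bochner_Integration.integrable_bound[OF Pi P2m]) (auto simp: P2_def)
  have L: "(\<integral>y. P1 (x, y) \<partial>lborel) = L x" for x
    unfolding P1_def P_def L_def
    by (subst integral_mult_right_zero[symmetric], rule Bochner_Integration.integral_cong)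
       (auto simp: indicator_def)
  have U: "(\<integral>x. P2 (x, y) \<partial>lborel) = U y" for y
    unfolding P2_def P_def U_def
    by (subst integral_mult_left_zero[symmetric], rule Bochner_Integration.integral_cong)
       (auto simp: indicator_def)
  show "integrable lborel L"
    using lborel_pair.integrable_fst[of "\<lambda>x y. P1 (x, y)"] P1i L by simp
  show "integrable lborel U"
    using lborel_pair.integrable_snd[of "\<lambda>x y. P2 (x, y)"] P2i U by simp
  have "integral\<^sup>L lborel F * integral\<^sup>L lborel G = integral\<^sup>L (lborel \<Otimes>\<^sub>M lborel) P"
    unfolding P_def using Fi Gi by (rule integral_lborel_pair_mult[symmetric])
  also have "\<dots> = integral\<^sup>L (lborel \<Otimes>\<^sub>M lborel) P1 + integral\<^sup>L (lborel \<Otimes>\<^sub>M lborel) P2"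
  proof -
    have "P = (\<lambda>z. P1 z + P2 z)" by (auto simp: P1_def P2_def fun_eq_iff)
    then show ?thesis by (simp add: Bochner_Integration.integral_add[OF P1i P2i])
  qed
  also have "\<dots> = integral\<^sup>L lborel L + integral\<^sup>L lborel U"
    using lborel_pair.integral_fst[of "\<lambda>x y. P1 (x, y)"] lborel_pair.integral_snd[of "\<lambda>x y. P2 (x, y)"]
      P1i P2i L U by simp
  finally show "integral\<^sup>L lborel F * integral\<^sup>L lborel G = integral\<^sup>L lborel L + integral\<^sup>L lborel U" .
qed

lemma set_integral_mult_primitives:
  fixes f g :: "real \<Rightarrow> real"
  assumes f: "set_integrable lborel {a..b} f" and g: "set_integrable lborel {a..b} g"
  defines "H \<equiv> \<lambda>t. f t * (LINT s:{a..t}|lborel. g s) + (LINT s:{a..t}|lborel. f s) * g t"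
  shows "set_integrable lborel {a..b} H"
    and "(LINT t:{a..b}|lborel. H t) = (LINT s:{a..b}|lborel. f s) * (LINT s:{a..b}|lborel. g s)"
proof -
  let ?I = "indicator {a..b} :: real \<Rightarrow> real"
  define F where "F x = ?I x * f x" for x
  define G where "G x = ?I x * g x" for x
  have Fi: "integrable lborel F" using f unfolding F_def set_integrable_def by simp
  have Gi: "integrable lborel G" using g unfolding G_def set_integrable_def by simp
  note split = integral_mult_split_diagonal[OF Fi Gi]
  have lower: "(\<integral>y. indicator {..x} y * G y \<partial>lborel) = (LINT s:{a..x}|lborel. g s)" if "x \<in> {a..b}" for x
    unfolding G_def set_lebesgue_integral_def
    by (rule Bochner_Integration.integral_cong) (use that in \<open>auto simp: indicator_def\<close>)
  have upper: "(\<integral>x. indicator {..<y} x * F x \<partial>lborel) = (LINT s:{a..y}|lborel. f s)" if "y \<in> {a..b}" for y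
  proof -
    have "set_integrable lborel {a..y} f" "set_integrable lborel {a..<y} f"
      using that by (auto intro: set_integrable_subset[OF f])
    then have "(LINT s:{a..<y}|lborel. f s) = (LINT s:{a..y}|lborel. f s)"
      using AE_lborel_singleton[of y]
      by (intro set_integral_cong_set) (auto simp: set_borel_measurable_def set_integrable_def elim!: eventually_mono)
    moreover have "(\<integral>x. indicator {..<y} x * F x \<partial>lborel) = (LINT s:{a..<y}|lborel. f s)"
      unfolding F_def set_lebesgue_integral_def
      by (rule Bochner_Integration.integral_cong) (use that in \<open>auto simp: indicator_def\<close>)
    ultimately show ?thesis by simp
  qed
  have H: "?I t * H t = F t * (\<integral>y. indicator {..t} y * G y \<partial>lborel) + (\<integral>x. indicator {..<t} x * F x \<partial>lborel) * G t" for t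
  proof (cases "t \<in> {a..b}")
    case True
    then show ?thesis unfolding lower[OF True] upper[OF True] by (simp add: H_def F_def G_def)
  qed (simp add: F_def G_def)
  show "set_integrable lborel {a..b} H"
    unfolding set_integrable_def using Bochner_Integration.integrable_add[OF split(1,2)] by (simp add: H)
  have "(LINT t:{a..b}|lborel. H t) = integral\<^sup>L lborel F * integral\<^sup>L lborel G"
    unfolding set_lebesgue_integral_def
    using Bochner_Integration.integral_add[OF split(1,2)] split(3) by (simp add: H)
  then show "(LINT t:{a..b}|lborel. H t) = (LINT s:{a..b}|lborel. f s) * (LINT s:{a..b}|lborel. g s)"
    by (simp add: F_def[abs_def] G_def[abs_def] set_lebesgue_integral_def)
qed

lemma primitive_on_subset:
  assumes F: "primitive_on F f a b" and "c \<le> b"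
  shows "primitive_on F f a c"
  unfolding primitive_on_def
proof (intro conjI ballI)
  show "set_integrable lborel {a..c} f"
    using \<open>c \<le> b\<close> by (auto intro: set_integrable_subset[OF primitive_on_integrable[OF F]])
  show "F t = F a + (LINT s:{a..t}|lborel. f s)" if "t \<in> {a..c}" for t
    using primitive_onD[OF F, of t] that \<open>c \<le> b\<close> by simp
qed

lemma primitive_on_integral:
  assumes "primitive_on F f a b" and "a \<le> b"
  shows "(LINT s:{a..b}|lborel. f s) = F b - F a"
  using primitive_onD[OF assms(1), of b] assms(2) by simp

lemma primitive_on_continuous:
  assumes "primitive_on F f a b"
  shows "continuous_on {a..b} F"
proof -
  have f: "set_integrable lborel {a..b} f"
    using assms by (rule primitive_on_integrable)
  have "continuous_on {a..b} (\<lambda>t. F a + integral {a..t} f)"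
    using set_borel_integral_eq_integral(1)[OF f] by (intro continuous_intros indefinite_integral_continuous_1)
  moreover have "F t = F a + integral {a..t} f" if "t \<in> {a..b}" for t
    using primitive_onD[OF assms that] set_borel_integral_eq_integral(2)[OF set_integrable_subset[OF f]] that by auto
  ultimately show ?thesis using continuous_on_cong by (metis (no_types, lifting))
qed

lemma primitive_on_add:
  assumes F: "primitive_on F f a b" and G: "primitive_on G g a b"
  shows "primitive_on (\<lambda>t. F t + G t) (\<lambda>t. f t + g t) a b"
  unfolding primitive_on_def
proof (intro conjI ballI)
  have f: "set_integrable lborel {a..b} f" and g: "set_integrable lborel {a..b} g"
    using F G by (auto intro: primitive_on_integrable)
  then show "set_integrable lborel {a..b} (\<lambda>t. f t + g t)" by (rule set_integral_add)
  fix t assume t: "t \<in> {a..b}"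
  have "set_integrable lborel {a..t} f" "set_integrable lborel {a..t} g"
    using t by (auto intro: set_integrable_subset[OF f] set_integrable_subset[OF g])
  then have "(LINT s:{a..t}|lborel. f s + g s) = (LINT s:{a..t}|lborel. f s) + (LINT s:{a..t}|lborel. g s)"
    by (rule set_integral_add(2))
  then show "F t + G t = F a + G a + (LINT s:{a..t}|lborel. f s + g s)"
    using primitive_onD[OF F t] primitive_onD[OF G t] by simp
qed

lemma primitive_on_cmult:
  assumes F: "primitive_on F f a b"
  shows "primitive_on (\<lambda>t. c * F t) (\<lambda>t. c * f t) a b"
  unfolding primitive_on_def
proof (intro conjI ballI)
  show "set_integrable lborel {a..b} (\<lambda>t. c * f t)"
    using primitive_on_integrable[OF F] by (rule set_integrable_mult_right)
  show "c * F t = c * F a + (LINT s:{a..t}|lborel. c * f s)" if "t \<in> {a..b}" for t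
    using primitive_onD[OF F that] by (simp add: distrib_left)
qed

lemma primitive_on_diff:
  assumes "primitive_on F f a b" and "primitive_on G g a b"
  shows "primitive_on (\<lambda>t. F t - G t) (\<lambda>t. f t - g t) a b"
  using primitive_on_add[OF assms(1) primitive_on_cmult[OF assms(2), of "-1"]] by simp

lemma primitive_on_mult:
  assumes F: "primitive_on F f a b" and G: "primitive_on G g a b"
  shows "primitive_on (\<lambda>t. F t * G t) (\<lambda>t. f t * G t + F t * g t) a b"
  unfolding primitive_on_def
proof
  let ?If = "\<lambda>t. LINT s:{a..t}|lborel. f s" and ?Ig = "\<lambda>t. LINT s:{a..t}|lborel. g s"
  have f: "set_integrable lborel {a..b} f" and g: "set_integrable lborel {a..b} g"
    using F G by (auto intro: primitive_on_integrable)
  have eq: "f t * G t + F t * g t = (f t * ?Ig t + ?If t * g t) + (G a * f t + F a * g t)"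
    if "t \<in> {a..b}" for t
    using primitive_onD[OF F that] primitive_onD[OF G that] by (simp add: algebra_simps)
  have lin: "primitive_on (\<lambda>t. G a * F t + F a * G t) (\<lambda>t. G a * f t + F a * g t) a b"
    by (intro primitive_on_add primitive_on_cmult F G)
  show "set_integrable lborel {a..b} (\<lambda>t. f t * G t + F t * g t)"
    using set_integral_add(1)[OF set_integral_mult_primitives(1)[OF f g] primitive_on_integrable[OF lin]]
      set_integrable_cong[of lborel lborel "{a..b}" "{a..b}", OF refl refl eq] by simp
  show "\<forall>t\<in>{a..b}. F t * G t = F a * G a + (LINT s:{a..t}|lborel. f s * G s + F s * g s)"
  proof
    fix t assume t: "t \<in> {a..b}"
    have ft: "set_integrable lborel {a..t} f" and gt: "set_integrable lborel {a..t} g"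
      using t by (auto intro: set_integrable_subset[OF f] set_integrable_subset[OF g])
    have lint: "primitive_on (\<lambda>t. G a * F t + F a * G t) (\<lambda>t. G a * f t + F a * g t) a t"
      using lin t by (auto intro: primitive_on_subset)
    have lint_eq: "(LINT s:{a..t}|lborel. G a * f s + F a * g s) = G a * F t + F a * G t - (G a * F a + F a * G a)"
      using primitive_on_integral[OF lint] t by simp
    have "(LINT s:{a..t}|lborel. f s * G s + F s * g s)
        = (LINT s:{a..t}|lborel. (f s * ?Ig s + ?If s * g s) + (G a * f s + F a * g s))"
      using t by (intro set_lebesgue_integral_cong) (auto intro: eq)
    also have "\<dots> = ?If t * ?Ig t + (LINT s:{a..t}|lborel. G a * f s + F a * g s)"
      using set_integral_mult_primitives[OF ft gt] primitive_on_integrable[OF lint]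
      by (simp add: set_integral_add(2))
    also have "\<dots> = F t * G t - F a * G a"
      using primitive_onD[OF F t] primitive_onD[OF G t] lint_eq by (simp add: algebra_simps)
    finally show "F t * G t = F a * G a + (LINT s:{a..t}|lborel. f s * G s + F s * g s)" by simp
  qed
qed

lemma primitive_on_derivative:
  assumes "\<And>x. x \<in> {a..b} \<Longrightarrow> (F has_real_derivative f x) (at x)" and "continuous_on {a..b} f"
  shows "primitive_on F f a b"
  unfolding primitive_on_def
proof (intro conjI ballI)
  show "set_integrable lborel {a..b} f" by (rule borel_integrable_atLeastAtMost'[OF assms(2)])
  fix t assume t: "t \<in> {a..b}"
  have "integral\<^sup>L lborel (\<lambda>x. indicator {a..t} x *\<^sub>R f x) = F t - F a"
    using t assms
    by (intro integral_FTC_atLeastAtMost)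
       (auto simp: has_real_derivative_iff_has_vector_derivative intro: has_vector_derivative_at_within
             continuous_on_subset)
  then show "F t = F a + (LINT s:{a..t}|lborel. f s)" by (simp add: set_lebesgue_integral_def)
qed

lemma continuous_on_of_has_real_derivative:
  assumes "\<And>t. (h has_real_derivative h' t) (at t)"
  shows "continuous_on S h"
  using assms by (meson DERIV_isCont continuous_at_imp_continuous_on)

lemma square_integrable_imp_set_integrable:
  fixes v :: "real \<Rightarrow> real"
  assumes m: "set_borel_measurable lborel {a..b} v" and v2: "set_integrable lborel {a..b} (\<lambda>t. (v t)\<^sup>2)"
  shows "set_integrable lborel {a..b} v"
proof (rule set_integrable_bound[OF _ m])
  show "set_integrable lborel {a..b} (\<lambda>t. 1 + (v t)\<^sup>2)"
    using borel_integrable_atLeastAtMost'[of a b "\<lambda>_. 1::real"] v2 by (intro set_integral_add) auto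
  have "\<bar>v x\<bar> \<le> 1 + (v x)\<^sup>2" for x
  proof (cases "\<bar>v x\<bar> \<le> 1")
    case False
    then have "\<bar>v x\<bar> * 1 \<le> \<bar>v x\<bar> * \<bar>v x\<bar>" by (intro mult_left_mono) auto
    then show ?thesis by (simp add: power2_eq_square)
  qed (auto intro: add_increasing2)
  then show "AE x in lborel. x \<in> {a..b} \<longrightarrow> norm (v x) \<le> norm (1 + (v x)\<^sup>2)"
    by (simp add: abs_of_nonneg add_nonneg_nonneg)
qed

lemma set_integrable_mult_continuous:
  fixes v w :: "real \<Rightarrow> real"
  assumes v: "set_integrable lborel {a..b} v" and w: "continuous_on {a..b} w"
  shows "set_integrable lborel {a..b} (\<lambda>t. v t * w t)"
proof -
  obtain M where M: "\<forall>t\<in>{a..b}. \<bar>w t\<bar> \<le> M"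
    using compact_imp_bounded[OF compact_continuous_image[OF w compact_Icc]]
    unfolding bounded_iff by auto
  have wm: "(\<lambda>x. indicator {a..b} x *\<^sub>R w x) \<in> borel_measurable borel"
    by (rule borel_measurable_continuous_on_indicator[OF _ w]) auto
  have vi: "integrable lborel (\<lambda>x. indicator {a..b} x * v x)"
    using v unfolding set_integrable_def by simp
  have "integrable lborel (\<lambda>x. indicator {a..b} x * (v x * w x))"
  proof (rule Bochner_Integration.integrable_bound[of _ "\<lambda>x. M * (indicator {a..b} x * v x)"])
    show "integrable lborel (\<lambda>x. M * (indicator {a..b} x * v x))" using vi by simp
    have "(\<lambda>x. (indicator {a..b} x * v x) * (indicator {a..b} x *\<^sub>R w x)) \<in> borel_measurable lborel"
      using vi wm by (simp add: measurable_lborel1 borel_measurable_integrable)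
    then show "(\<lambda>x. indicator {a..b} x * (v x * w x)) \<in> borel_measurable lborel"
      by (rule measurable_cong[THEN iffD1, rotated]) (auto simp: indicator_def)
    have "\<bar>v x\<bar> * \<bar>w x\<bar> \<le> \<bar>v x\<bar> * \<bar>M\<bar>" if "x \<in> {a..b}" for x
      using M that by (intro mult_left_mono) (auto intro: order_trans[OF _ abs_ge_self])
    then show "AE x in lborel. norm (indicator {a..b} x * (v x * w x)) \<le> norm (M * (indicator {a..b} x * v x))"
      by (auto simp: indicator_def abs_mult mult.commute)
  qed
  then show ?thesis unfolding set_integrable_def by simp
qed

lemma set_integrable_square_diff:
  fixes u w :: "real \<Rightarrow> real"
  assumes u: "set_integrable lborel {a..b} u" and u2: "set_integrable lborel {a..b} (\<lambda>t. (u t)\<^sup>2)"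
    and w: "continuous_on {a..b} w"
  shows "set_integrable lborel {a..b} (\<lambda>t. (u t - w t)\<^sup>2)"
proof -
  have "set_integrable lborel {a..b} (\<lambda>t. (u t)\<^sup>2 - 2 * (u t * w t) + (w t)\<^sup>2)"
    using u2 set_integrable_mult_continuous[OF u w] borel_integrable_atLeastAtMost'[of a b "\<lambda>t. (w t)\<^sup>2"] w
    by (intro set_integral_add set_integral_diff set_integrable_mult_right) (auto intro: continuous_intros)
  moreover have "(u t - w t)\<^sup>2 = (u t)\<^sup>2 - 2 * (u t * w t) + (w t)\<^sup>2" for t
    by (simp add: power2_eq_square algebra_simps)
  ultimately show ?thesis by simp
qed

lemma set_integral_nonneg:
  fixes f :: "real \<Rightarrow> real"
  assumes "\<And>x. x \<in> S \<Longrightarrow> 0 \<le> f x"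
  shows "0 \<le> (LINT x:S|lborel. f x)"
  unfolding set_lebesgue_integral_def
  by (rule Bochner_Integration.integral_nonneg) (use assms in \<open>auto simp: indicator_def\<close>)

lemma continuous_nonneg_set_integral_eq_0:
  fixes f :: "real \<Rightarrow> real"
  assumes "a < b" and "continuous_on {a..b} f" and "\<And>t. 0 \<le> f t"
    and "(LINT t:{a..b}|lborel. f t) = 0" and "t \<in> {a..b}"
  shows "f t = 0"
proof -
  have "integral {a..b} f = 0"
    using assms(4) set_borel_integral_eq_integral(2)[OF borel_integrable_atLeastAtMost'[OF assms(2)]] by simp
  then show ?thesis using integral_eq_0_iff[OF assms(2,1)] assms(3,5) by blast
qed

section \<open>Generalised sine and cosine\<close>

definition sn :: "real \<Rightarrow> real \<Rightarrow> real" where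
  "sn c t = (if c > 0 then sin (sqrt c * t) / sqrt c else if c = 0 then t else sinh (sqrt (- c) * t) / sqrt (- c))"

definition cs :: "real \<Rightarrow> real \<Rightarrow> real" where
  "cs c t = (if c > 0 then cos (sqrt c * t) else if c = 0 then 1 else cosh (sqrt (- c) * t))"

lemma sn_0 [simp]: "sn c 0 = 0"
  by (simp add: sn_def)

lemma cs_0 [simp]: "cs c 0 = 1"
  by (simp add: cs_def)

lemma sn_zero [simp]: "sn 0 t = t"
  by (simp add: sn_def)

lemma has_real_derivative_sn: "(sn c has_real_derivative cs c t) (at t)"
proof -
  consider "c > 0" | "c = 0" | "c < 0" by linarith
  then show ?thesis
  proof cases
    case 1
    then have "sn c = (\<lambda>t. sin (sqrt c * t) / sqrt c)" by (simp add: sn_def fun_eq_iff)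
    then show ?thesis using 1 by (auto intro!: derivative_eq_intros simp: cs_def field_simps)
  next
    case 2
    then have "sn c = (\<lambda>t. t)" by (simp add: sn_def fun_eq_iff)
    then show ?thesis using 2 by (auto intro!: derivative_eq_intros simp: cs_def)
  next
    case 3
    define w where "w = - c"
    have "w > 0" and "sn c = (\<lambda>t. sinh (sqrt w * t) / sqrt w)" and "cs c t = cosh (sqrt w * t)"
      using 3 by (simp_all add: w_def sn_def cs_def fun_eq_iff)
    then show ?thesis by (auto intro!: derivative_eq_intros simp: field_simps)
  qed
qed

lemma has_real_derivative_cs: "(cs c has_real_derivative - c * sn c t) (at t)"
proof -
  consider "c > 0" | "c = 0" | "c < 0" by linarith
  then show ?thesis
  proof cases
    case 1
    then have "cs c = (\<lambda>t. cos (sqrt c * t))" by (simp add: cs_def fun_eq_iff)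
    then show ?thesis using 1 by (auto intro!: derivative_eq_intros simp: sn_def field_simps)
  next
    case 2
    then have "cs c = (\<lambda>t. 1)" by (simp add: cs_def fun_eq_iff)
    then show ?thesis using 2 by simp
  next
    case 3
    define w where "w = - c"
    have w: "w > 0" and "cs c = (\<lambda>t. cosh (sqrt w * t))"
      using 3 by (simp_all add: w_def cs_def fun_eq_iff)
    then have "(cs c has_real_derivative sinh (sqrt w * t) * sqrt w) (at t)"
      by (auto intro!: derivative_eq_intros)
    moreover have "- c * sn c t = sinh (sqrt w * t) * (w / sqrt w)"
      using 3 by (simp add: w_def sn_def)
    ultimately show ?thesis using real_div_sqrt[of w] w by simp
  qed
qed

lemma cs_sq_add_sn_sq: "(cs c t)\<^sup>2 + c * (sn c t)\<^sup>2 = 1"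
proof -
  consider "c > 0" | "c = 0" | "c < 0" by linarith
  then show ?thesis
  proof cases
    case 1
    then show ?thesis by (simp add: cs_def sn_def power_divide)
  next
    case 3
    then have "c * (sn c t)\<^sup>2 = - (sinh (sqrt (- c) * t))\<^sup>2"
      by (simp add: sn_def power_divide)
    then show ?thesis using 3 cosh_square_eq[of "sqrt (- c) * t"] by (simp add: cs_def)
  qed (simp add: cs_def)
qed

lemma sqrt_mult_less_pi:
  assumes "c < pi\<^sup>2" and "0 \<le> t" and "t \<le> 1"
  shows "sqrt c * t < pi"
proof -
  have "sqrt c < pi"
    using assms(1) real_sqrt_less_mono[of c "pi\<^sup>2"] by simp
  then show ?thesis
    using assms(2,3) by (cases "sqrt c \<le> 0") (auto intro: le_less_trans[OF mult_nonpos_nonneg] le_less_trans[OF mult_left_le])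
qed

lemma sn_pos:
  assumes "0 < t" and "c > 0 \<Longrightarrow> sqrt c * t < pi"
  shows "0 < sn c t"
  using assms by (auto simp: sn_def intro!: divide_pos_pos sin_gt_zero)

lemma sn_nonneg:
  assumes "0 \<le> t" and "c > 0 \<Longrightarrow> sqrt c * t \<le> pi"
  shows "0 \<le> sn c t"
  using assms by (auto simp: sn_def intro!: divide_nonneg_pos sin_ge_zero)

lemma sn_one_pos: "c < pi\<^sup>2 \<Longrightarrow> 0 < sn c 1"
  using sqrt_mult_less_pi[of c 1] by (intro sn_pos) auto

lemma sn_ratio_nonneg:
  assumes "c < pi\<^sup>2" and "\<tau> \<in> {0..1}"
  shows "0 \<le> sn c \<tau> / sn c 1"
proof -
  have "sqrt c * \<tau> \<le> pi" using sqrt_mult_less_pi[of c \<tau>] assms by fastforce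
  then show ?thesis using assms by (intro divide_nonneg_pos sn_nonneg sn_one_pos) auto
qed

lemma sn_ratio_pos: "0 < c \<Longrightarrow> sn c t / sn c 1 = sin (t * sqrt c) / sin (sqrt c)"
  by (simp add: sn_def mult.commute)

lemma sn_ratio_neg: "c < 0 \<Longrightarrow> sn c t / sn c 1 = sinh (t * sqrt (- c)) / sinh (sqrt (- c))"
  by (simp add: sn_def mult.commute)

lemma jacobi_solution_eq:
  fixes X P :: "real \<Rightarrow> real"
  assumes X: "\<And>s. (X has_real_derivative P s) (at s)"
    and P: "\<And>s. (P has_real_derivative - c * X s) (at s)" and X0: "X 0 = 0"
  shows "X s = P 0 * sn c s" and "P s = P 0 * cs c s"
proof -
  (* f and g are Wronskians of (X, P) against the fundamental system (cs, sn), hence constant. *)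
  define f where "f s = X s * cs c s - P s * sn c s" for s
  define g where "g s = c * X s * sn c s + P s * cs c s" for s
  have "(f has_real_derivative 0) (at s)" for s
    unfolding f_def[abs_def]
    by (rule derivative_eq_intros X P has_real_derivative_sn has_real_derivative_cs refl)+ (simp add: algebra_simps)
  then have f: "f s = 0" for s
    using DERIV_isconst_all[of f s 0] X0 by (simp add: f_def)
  have "(g has_real_derivative 0) (at s)" for s
    unfolding g_def[abs_def]
    by (rule derivative_eq_intros X P has_real_derivative_sn has_real_derivative_cs refl)+ (simp add: algebra_simps)
  then have g: "g s = P 0" for s
    using DERIV_isconst_all[of g s 0] X0 by (simp add: g_def)
  have "X s * ((cs c s)\<^sup>2 + c * (sn c s)\<^sup>2) = cs c s * f s + sn c s * g s"
    and "P s * ((cs c s)\<^sup>2 + c * (sn c s)\<^sup>2) = - c * sn c s * f s + cs c s * g s"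
    by (simp_all add: f_def g_def algebra_simps power2_eq_square)
  then show "X s = P 0 * sn c s" and "P s = P 0 * cs c s"
    unfolding cs_sq_add_sn_sq f g by simp_all
qed

section \<open>The scalar problem\<close>

lemma has_real_derivative_cot:
  fixes \<omega> \<alpha> c t :: real
  assumes s: "sin (\<omega> * t + \<alpha>) \<noteq> 0" and w2: "\<omega>\<^sup>2 = c"
  shows "((\<lambda>t. \<omega> * cos (\<omega> * t + \<alpha>) / sin (\<omega> * t + \<alpha>)) has_real_derivative
           - c - (\<omega> * cos (\<omega> * t + \<alpha>) / sin (\<omega> * t + \<alpha>))\<^sup>2) (at t)"
  using s unfolding w2[symmetric]
  by (auto intro!: derivative_eq_intros simp: field_simps power2_eq_square sin_squared_eq)

lemma riccati_solution:
  assumes "0 < c" and "c < pi\<^sup>2"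
  obtains \<psi> where "primitive_on \<psi> (\<lambda>t. - c - (\<psi> t)\<^sup>2) 0 1"
proof -
  define \<omega> where "\<omega> = sqrt c"
  have \<omega>: "0 < \<omega>" "\<omega>\<^sup>2 = c" "\<omega> < pi"
    using assms sqrt_mult_less_pi[of c 1] by (auto simp: \<omega>_def)
  define \<alpha> where "\<alpha> = (pi - \<omega>) / 2"
  have sin_pos: "sin (\<omega> * t + \<alpha>) > 0" if "t \<in> {0..1}" for t
  proof (rule sin_gt_zero)
    show "0 < \<omega> * t + \<alpha>" using that \<omega> by (auto simp: \<alpha>_def intro: add_nonneg_pos)
    have "\<omega> * t \<le> \<omega>" using that \<omega> by (auto intro: mult_left_le)
    moreover have "\<omega> + \<alpha> < pi" using \<omega>(3) by (simp add: \<alpha>_def field_simps)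
    ultimately show "\<omega> * t + \<alpha> < pi" by linarith
  qed
  define \<psi> where "\<psi> t = \<omega> * cos (\<omega> * t + \<alpha>) / sin (\<omega> * t + \<alpha>)" for t
  have "(\<psi> has_real_derivative - c - (\<psi> t)\<^sup>2) (at t)" if "t \<in> {0..1}" for t
    unfolding \<psi>_def[abs_def] \<psi>_def
    using has_real_derivative_cot[OF _ \<omega>(2)] sin_pos[OF that] by simp
  moreover have "continuous_on {0..1} \<psi>"
    unfolding \<psi>_def using sin_pos by (intro continuous_intros) (metis less_irrefl)
  ultimately have "primitive_on \<psi> (\<lambda>t. - c - (\<psi> t)\<^sup>2) 0 1"
    by (intro primitive_on_derivative continuous_intros)
  then show ?thesis by (rule that)
qed

lemma
  assumes e: "primitive_on e v 0 1" and e0: "e 0 = 0" and e1: "e 1 = 0" and g: "primitive_on g g' 0 1"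
  shows set_integrable_by_parts_vanishing: "set_integrable lborel {0..1} (\<lambda>t. v t * g t + e t * g' t)"
    and set_integral_by_parts_vanishing: "(LINT t:{0..1}|lborel. v t * g t + e t * g' t) = 0"
proof -
  have "primitive_on (\<lambda>t. e t * g t) (\<lambda>t. v t * g t + e t * g' t) 0 1"
    using e g by (rule primitive_on_mult)
  then show "set_integrable lborel {0..1} (\<lambda>t. v t * g t + e t * g' t)"
    and "(LINT t:{0..1}|lborel. v t * g t + e t * g' t) = 0"
    using primitive_on_integral[of _ _ 0 1] e0 e1 by (auto intro: primitive_on_integrable)
qed

lemma wirtinger_inequality:
  fixes e v :: "real \<Rightarrow> real"
  assumes c: "c < pi\<^sup>2" and e: "primitive_on e v 0 1"
    and v2: "set_integrable lborel {0..1} (\<lambda>t. (v t)\<^sup>2)" and e0: "e 0 = 0" and e1: "e 1 = 0"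
  shows "c * (LINT t:{0..1}|lborel. (e t)\<^sup>2) \<le> (LINT t:{0..1}|lborel. (v t)\<^sup>2)"
proof (cases "c \<le> 0")
  case True
  have "0 \<le> (LINT t:{0..1}|lborel. (e t)\<^sup>2)" "0 \<le> (LINT t:{0..1}|lborel. (v t)\<^sup>2)"
    by (auto intro: set_integral_nonneg)
  then show ?thesis using True by (meson mult_nonpos_nonneg order_trans)
next
  case False
  then have "0 < c" by simp
  then obtain \<psi> where \<psi>: "primitive_on \<psi> (\<lambda>t. - c - (\<psi> t)\<^sup>2) 0 1"
    using riccati_solution c by blast
  (* Picone: (v - e psi)^2 = v^2 - c e^2 - (e^2 psi)', and e^2 psi vanishes at both ends. *)
  define X where "X t = v t * (e t * \<psi> t) + e t * (v t * \<psi> t + e t * (- c - (\<psi> t)\<^sup>2))" for t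
  have e\<psi>: "primitive_on (\<lambda>t. e t * \<psi> t) (\<lambda>t. v t * \<psi> t + e t * (- c - (\<psi> t)\<^sup>2)) 0 1"
    using e \<psi> by (rule primitive_on_mult)
  have X: "set_integrable lborel {0..1} X" "(LINT t:{0..1}|lborel. X t) = 0"
    unfolding X_def using e e0 e1 e\<psi> by (rule set_integrable_by_parts_vanishing set_integral_by_parts_vanishing)+
  have e2: "set_integrable lborel {0..1} (\<lambda>t. (e t)\<^sup>2)"
    by (intro borel_integrable_atLeastAtMost' continuous_intros primitive_on_continuous[OF e])
  have sq: "(v t - e t * \<psi> t)\<^sup>2 = (v t)\<^sup>2 - X t - c * (e t)\<^sup>2" for t
    unfolding X_def by (simp add: algebra_simps power2_eq_square)
  have "0 \<le> (LINT t:{0..1}|lborel. (v t - e t * \<psi> t)\<^sup>2)"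
    by (rule set_integral_nonneg) simp
  also have "\<dots> = (LINT t:{0..1}|lborel. (v t)\<^sup>2 - X t - c * (e t)\<^sup>2)"
    unfolding sq ..
  also have "\<dots> = (LINT t:{0..1}|lborel. (v t)\<^sup>2) - c * (LINT t:{0..1}|lborel. (e t)\<^sup>2)"
    using v2 X e2 by (simp add: set_integral_diff)
  finally show ?thesis by simp
qed

lemma extremal_action_le:
  fixes u \<eta> h h' :: "real \<Rightarrow> real"
  assumes c\<epsilon>: "c + \<epsilon> < pi\<^sup>2"
    and \<eta>: "primitive_on \<eta> u 0 1" and u2: "set_integrable lborel {0..1} (\<lambda>t. (u t)\<^sup>2)"
    and \<eta>0: "\<eta> 0 = h 0" and \<eta>1: "\<eta> 1 = h 1"
    and h: "\<And>t. (h has_real_derivative h' t) (at t)"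
    and h': "\<And>t. (h' has_real_derivative - c * h t) (at t)"
  shows "set_integrable lborel {0..1} (\<lambda>t. (u t)\<^sup>2 - c * (\<eta> t)\<^sup>2)"
    and "(LINT t:{0..1}|lborel. (h' t)\<^sup>2 - c * (h t)\<^sup>2) + \<epsilon> * (LINT t:{0..1}|lborel. (\<eta> t - h t)\<^sup>2)
           \<le> (LINT t:{0..1}|lborel. (u t)\<^sup>2 - c * (\<eta> t)\<^sup>2)"
proof -
  have hc: "continuous_on {0..1} h" by (rule continuous_on_of_has_real_derivative[OF h])
  have h'c: "continuous_on {0..1} h'" by (rule continuous_on_of_has_real_derivative[OF h'])
  have hp: "primitive_on h h' 0 1" using h h'c by (intro primitive_on_derivative)
  have h'p: "primitive_on h' (\<lambda>t. - c * h t) 0 1"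
    using h' hc by (intro primitive_on_derivative continuous_intros)
  define e where "e t = \<eta> t - h t" for t
  define v where "v t = u t - h' t" for t
  have ep: "primitive_on e v 0 1"
    unfolding e_def v_def using \<eta> hp by (rule primitive_on_diff)
  have e0: "e 0 = 0" and e1: "e 1 = 0" using \<eta>0 \<eta>1 by (simp_all add: e_def)
  have v2: "set_integrable lborel {0..1} (\<lambda>t. (v t)\<^sup>2)"
    unfolding v_def using primitive_on_integrable[OF \<eta>] u2 h'c by (rule set_integrable_square_diff)
  have e2: "set_integrable lborel {0..1} (\<lambda>t. (e t)\<^sup>2)"
    by (intro borel_integrable_atLeastAtMost' continuous_intros primitive_on_continuous[OF ep])
  have wirtinger: "(c + \<epsilon>) * (LINT t:{0..1}|lborel. (e t)\<^sup>2) \<le> (LINT t:{0..1}|lborel. (v t)\<^sup>2)"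
    by (rule wirtinger_inequality[OF c\<epsilon> ep v2 e0 e1])
  define Y where "Y t = v t * h' t + e t * (- c * h t)" for t
  have Y: "set_integrable lborel {0..1} Y" "(LINT t:{0..1}|lborel. Y t) = 0"
    unfolding Y_def using ep e0 e1 h'p by (rule set_integrable_by_parts_vanishing set_integral_by_parts_vanishing)+
  define Z where "Z t = (h' t)\<^sup>2 - c * (h t)\<^sup>2" for t
  have Z: "set_integrable lborel {0..1} Z"
    unfolding Z_def by (intro borel_integrable_atLeastAtMost' continuous_intros hc h'c)
  have split: "(u t)\<^sup>2 - c * (\<eta> t)\<^sup>2 = Z t + (2 * Y t + ((v t)\<^sup>2 - c * (e t)\<^sup>2))" for t
    unfolding Z_def Y_def v_def e_def by (simp add: power2_eq_square algebra_simps)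
  have rest: "set_integrable lborel {0..1} (\<lambda>t. 2 * Y t + ((v t)\<^sup>2 - c * (e t)\<^sup>2))"
    using Y(1) v2 e2 by (intro set_integral_add set_integral_diff set_integrable_mult_right) auto
  show "set_integrable lborel {0..1} (\<lambda>t. (u t)\<^sup>2 - c * (\<eta> t)\<^sup>2)"
    unfolding split using Z rest by (rule set_integral_add)
  have "(LINT t:{0..1}|lborel. (u t)\<^sup>2 - c * (\<eta> t)\<^sup>2)
      = (LINT t:{0..1}|lborel. Z t) + 2 * (LINT t:{0..1}|lborel. Y t)
        + ((LINT t:{0..1}|lborel. (v t)\<^sup>2) - c * (LINT t:{0..1}|lborel. (e t)\<^sup>2))"
    unfolding split using Z rest Y(1) v2 e2
    by (simp add: set_integral_add(2) set_integral_diff(2) set_integral_diff(1) set_integrable_mult_right)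
  also have "\<dots> \<ge> (LINT t:{0..1}|lborel. Z t) + \<epsilon> * (LINT t:{0..1}|lborel. (e t)\<^sup>2)"
    using Y(2) wirtinger by (simp add: algebra_simps)
  finally show "(LINT t:{0..1}|lborel. (h' t)\<^sup>2 - c * (h t)\<^sup>2) + \<epsilon> * (LINT t:{0..1}|lborel. (\<eta> t - h t)\<^sup>2)
           \<le> (LINT t:{0..1}|lborel. (u t)\<^sup>2 - c * (\<eta> t)\<^sup>2)"
    unfolding Z_def e_def .
qed

definition bvp_solution :: "real \<Rightarrow> real \<Rightarrow> real \<Rightarrow> real \<Rightarrow> real" where
  "bvp_solution c a b t = (a * sn c (1 - t) + b * sn c t) / sn c 1"

definition bvp_solution' :: "real \<Rightarrow> real \<Rightarrow> real \<Rightarrow> real \<Rightarrow> real" where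
  "bvp_solution' c a b t = (b * cs c t - a * cs c (1 - t)) / sn c 1"

lemma has_real_derivative_bvp_solution:
  "(bvp_solution c a b has_real_derivative bvp_solution' c a b t) (at t)"
proof -
  have "((\<lambda>t. sn c (1 - t)) has_real_derivative cs c (1 - t) * (0 - 1)) (at t)"
    by (rule DERIV_chain2[OF has_real_derivative_sn]) (auto intro!: derivative_eq_intros)
  then have "((\<lambda>t. a * sn c (1 - t) + b * sn c t) has_real_derivative b * cs c t - a * cs c (1 - t)) (at t)"
    using has_real_derivative_sn by (auto intro!: derivative_eq_intros)
  then show ?thesis
    unfolding bvp_solution_def[abs_def] bvp_solution'_def by (rule DERIV_cdivide)
qed

lemma has_real_derivative_bvp_solution':
  "(bvp_solution' c a b has_real_derivative - c * bvp_solution c a b t) (at t)"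
proof -
  have "((\<lambda>t. cs c (1 - t)) has_real_derivative - c * sn c (1 - t) * (0 - 1)) (at t)"
    by (rule DERIV_chain2[OF has_real_derivative_cs]) (auto intro!: derivative_eq_intros)
  then have "((\<lambda>t. b * cs c t - a * cs c (1 - t)) has_real_derivative - c * (a * sn c (1 - t) + b * sn c t)) (at t)"
    using has_real_derivative_cs by (auto intro!: derivative_eq_intros simp: algebra_simps)
  then show ?thesis
    unfolding bvp_solution_def bvp_solution'_def[abs_def] by (auto dest: DERIV_cdivide)
qed

lemma bvp_solution_0: "c < pi\<^sup>2 \<Longrightarrow> bvp_solution c a b 0 = a"
  using sn_one_pos[of c] by (simp add: bvp_solution_def)

lemma bvp_solution_1: "c < pi\<^sup>2 \<Longrightarrow> bvp_solution c a b 1 = b"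
  using sn_one_pos[of c] by (simp add: bvp_solution_def)

section \<open>LQ problems with identity control and diagonal potential\<close>

definition diag_mat :: "('n::finite \<Rightarrow> real) \<Rightarrow> real^'n^'n" where
  "diag_mat c = (\<chi> i j. if i = j then c i else 0)"

lemma diag_mat_mult_vec_nth [simp]: "(diag_mat c *v y) $ i = c i * y $ i"
  by (simp add: diag_mat_def matrix_vector_mult_def if_distrib[of "\<lambda>a. a * _"] cong: if_cong)

definition lq_cost :: "real^'n^'n \<Rightarrow> real \<Rightarrow> (real \<Rightarrow> real^'n) \<Rightarrow> (real \<Rightarrow> real^'m) \<Rightarrow> real" where
  "lq_cost Q T \<gamma> u = (1/2) * (LINT t:{0..T}|lborel. (norm (u t))\<^sup>2 - \<gamma> t \<bullet> (Q *v \<gamma> t))"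

lemma lq_action_eq_INF_lq_cost:
  "lq_action A B Q T \<gamma> = (INF u \<in> {u. lq_control A B T \<gamma> u}. ereal (lq_cost Q T \<gamma> u))"
  by (simp add: lq_action_def lq_cost_def)

lemma lq_cost_diag_mat:
  fixes \<eta> u :: "real \<Rightarrow> real^'n::finite"
  assumes "\<And>i. set_integrable lborel {0..T} (\<lambda>t. (u t $ i)\<^sup>2 - c i * (\<eta> t $ i)\<^sup>2)"
  shows "lq_cost (diag_mat c) T \<eta> u = (1/2) * (\<Sum>i\<in>UNIV. LINT t:{0..T}|lborel. (u t $ i)\<^sup>2 - c i * (\<eta> t $ i)\<^sup>2)"
proof -
  have "(norm (u t))\<^sup>2 - \<eta> t \<bullet> (diag_mat c *v \<eta> t) = (\<Sum>i\<in>UNIV. (u t $ i)\<^sup>2 - c i * (\<eta> t $ i)\<^sup>2)" for t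
    by (simp add: norm_vec_def L2_set_def sum_nonneg inner_vec_def sum_subtractf power2_eq_square algebra_simps)
  then have "lq_cost (diag_mat c) T \<eta> u
      = (1/2) * (\<integral>t. (\<Sum>i\<in>UNIV. indicator {0..T} t * ((u t $ i)\<^sup>2 - c i * (\<eta> t $ i)\<^sup>2)) \<partial>lborel)"
    by (simp add: lq_cost_def set_lebesgue_integral_def sum_distrib_left)
  also have "\<dots> = (1/2) * (\<Sum>i\<in>UNIV. LINT t:{0..T}|lborel. (u t $ i)\<^sup>2 - c i * (\<eta> t $ i)\<^sup>2)"
    using assms by (subst Bochner_Integration.integral_sum) (auto simp: set_integrable_def set_lebesgue_integral_def)
  finally show ?thesis .
qed

lemma set_borel_measurable_vec_nth:
  fixes u :: "real \<Rightarrow> real^'n"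
  assumes "set_borel_measurable lborel S u"
  shows "set_borel_measurable lborel S (\<lambda>t. u t $ i)"
proof -
  have "(\<lambda>x. (indicator S x *\<^sub>R u x) \<bullet> axis i 1) \<in> borel_measurable lborel"
    using assms unfolding set_borel_measurable_def by measurable
  then show ?thesis unfolding set_borel_measurable_def by (simp add: inner_axis)
qed

lemma set_integrable_square_vec_nth:
  fixes u :: "real \<Rightarrow> real^'n"
  assumes m: "set_borel_measurable lborel S u" and i2: "set_integrable lborel S (\<lambda>t. (norm (u t))\<^sup>2)"
  shows "set_integrable lborel S (\<lambda>t. (u t $ i)\<^sup>2)"
  unfolding set_integrable_def
proof (rule Bochner_Integration.integrable_bound)
  show "integrable lborel (\<lambda>x. indicator S x *\<^sub>R (norm (u x))\<^sup>2)"
    using i2 unfolding set_integrable_def .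
  have "(\<lambda>x. (indicator S x *\<^sub>R (u x $ i))\<^sup>2) \<in> borel_measurable lborel"
    using set_borel_measurable_vec_nth[OF m] unfolding set_borel_measurable_def by measurable
  moreover have "(\<lambda>x. (indicator S x *\<^sub>R (u x $ i))\<^sup>2) = (\<lambda>x. indicator S x *\<^sub>R (u x $ i)\<^sup>2)"
    by (rule ext) (simp add: indicator_def)
  ultimately show "(\<lambda>x. indicator S x *\<^sub>R (u x $ i)\<^sup>2) \<in> borel_measurable lborel"
    by simp
  have "\<bar>u x $ i\<bar>\<^sup>2 \<le> (norm (u x))\<^sup>2" for x
    by (rule power_mono[OF component_le_norm_cart]) simp
  then show "AE x in lborel. norm (indicator S x *\<^sub>R (u x $ i)\<^sup>2) \<le> norm (indicator S x *\<^sub>R (norm (u x))\<^sup>2)"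
    by (simp add: indicator_def)
qed

lemma lq_control_identity_component:
  fixes \<eta> u :: "real \<Rightarrow> real^'n"
  assumes "lq_control (0::real^'n^'n) (mat 1) T \<eta> u"
  shows "primitive_on (\<lambda>t. \<eta> t $ i) (\<lambda>t. u t $ i) 0 T"
    and "set_integrable lborel {0..T} (\<lambda>t. (u t $ i)\<^sup>2)"
proof -
  have um: "set_borel_measurable lborel {0..T} u"
    and u2: "set_integrable lborel {0..T} (\<lambda>t. (norm (u t))\<^sup>2)"
    and hi: "\<forall>t\<in>{0..T}. (u has_integral (\<eta> t - \<eta> 0)) {0..t}"
    using assms unfolding lq_control_def by auto
  show ui2: "set_integrable lborel {0..T} (\<lambda>t. (u t $ i)\<^sup>2)"
    by (rule set_integrable_square_vec_nth[OF um u2])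
  have ui: "set_integrable lborel {0..T} (\<lambda>t. u t $ i)"
    by (rule square_integrable_imp_set_integrable[OF set_borel_measurable_vec_nth[OF um] ui2])
  show "primitive_on (\<lambda>t. \<eta> t $ i) (\<lambda>t. u t $ i) 0 T"
    unfolding primitive_on_def
  proof (intro conjI ballI ui)
    fix t :: real assume t: "t \<in> {0..T}"
    have "(u has_integral (\<eta> t - \<eta> 0)) {0..t}" using hi t by blast
    from has_integral_linear[OF this bounded_linear_vec_nth[of i]]
    have "((\<lambda>s. u s $ i) has_integral (\<eta> t $ i - \<eta> 0 $ i)) {0..t}" by (simp add: o_def)
    moreover have "(LINT s:{0..t}|lborel. u s $ i) = integral {0..t} (\<lambda>s. u s $ i)"
      using t by (intro set_borel_integral_eq_integral(2) set_integrable_subset[OF ui]) auto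
    ultimately show "\<eta> t $ i = \<eta> 0 $ i + (LINT s:{0..t}|lborel. u s $ i)"
      by (simp add: integral_unique)
  qed
qed

lemma has_integral_vec_componentwise:
  fixes f :: "real \<Rightarrow> real^'n"
  assumes "\<And>i. ((\<lambda>s. f s $ i) has_integral y $ i) S"
  shows "(f has_integral y) S"
proof (rule has_integral_componentwise)
  fix b :: "real^'n" assume "b \<in> Basis"
  then obtain i where b: "b = axis i 1" by (auto simp: Basis_vec_def)
  show "((\<lambda>x. f x \<bullet> b) has_integral y \<bullet> b) S"
    unfolding b inner_axis using assms[of i] by simp
qed

definition diag_extremal :: "('n::finite \<Rightarrow> real) \<Rightarrow> real^'n \<Rightarrow> real^'n \<Rightarrow> real \<Rightarrow> real^'n" where
  "diag_extremal c x z t = (\<chi> i. bvp_solution (c i) (x $ i) (z $ i) t)"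

definition diag_extremal' :: "('n::finite \<Rightarrow> real) \<Rightarrow> real^'n \<Rightarrow> real^'n \<Rightarrow> real \<Rightarrow> real^'n" where
  "diag_extremal' c x z t = (\<chi> i. bvp_solution' (c i) (x $ i) (z $ i) t)"

lemma diag_extremal_0: "(\<And>i. c i < pi\<^sup>2) \<Longrightarrow> diag_extremal c x z 0 = x"
  by (simp add: diag_extremal_def vec_eq_iff bvp_solution_0)

lemma diag_extremal_1: "(\<And>i. c i < pi\<^sup>2) \<Longrightarrow> diag_extremal c x z 1 = z"
  by (simp add: diag_extremal_def vec_eq_iff bvp_solution_1)

lemma continuous_on_diag_extremal: "continuous_on S (\<lambda>t. diag_extremal c x z t $ i)"
  unfolding diag_extremal_def
  by (simp add: continuous_on_of_has_real_derivative[OF has_real_derivative_bvp_solution])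

lemma continuous_on_diag_extremal': "continuous_on S (diag_extremal' c x z)"
  unfolding diag_extremal'_def[abs_def]
  by (intro continuous_on_vec_lambda continuous_on_of_has_real_derivative[OF has_real_derivative_bvp_solution'])

lemma lq_control_diag_extremal:
  "lq_control (0::real^'n^'n) (mat 1) T (diag_extremal c x z) (diag_extremal' c x z)"
  unfolding lq_control_def
proof (intro conjI ballI)
  show "set_borel_measurable lborel {0..T} (diag_extremal' c x z)"
    unfolding set_borel_measurable_def
    using borel_measurable_continuous_on_indicator[OF _ continuous_on_diag_extremal', of "{0..T}"] by simp
  show "set_integrable lborel {0..T} (\<lambda>t. (norm (diag_extremal' c x z t))\<^sup>2)"
    by (intro borel_integrable_atLeastAtMost' continuous_intros continuous_on_diag_extremal')
  fix t :: real assume t: "t \<in> {0..T}"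
  have "(diag_extremal' c x z has_integral diag_extremal c x z t - diag_extremal c x z 0) {0..t}"
  proof (rule has_integral_vec_componentwise)
    fix i
    have "(bvp_solution' (c i) (x $ i) (z $ i) has_integral
            bvp_solution (c i) (x $ i) (z $ i) t - bvp_solution (c i) (x $ i) (z $ i) 0) {0..t}"
      using t has_real_derivative_bvp_solution
      by (intro fundamental_theorem_of_calculus)
         (auto simp: has_real_derivative_iff_has_vector_derivative intro: has_vector_derivative_at_within)
    then show "((\<lambda>s. diag_extremal' c x z s $ i) has_integral (diag_extremal c x z t - diag_extremal c x z 0) $ i) {0..t}"
      by (simp add: diag_extremal_def diag_extremal'_def)
  qed
  then show "((\<lambda>s. 0 *v diag_extremal c x z s + mat 1 *v diag_extremal' c x z s) has_integral
               diag_extremal c x z t - diag_extremal c x z 0) {0..t}"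
    by simp
qed

lemma lq_cost_ge_diag_extremal:
  fixes \<eta> u :: "real \<Rightarrow> real^'n::finite"
  assumes "0 \<le> \<epsilon>" and c\<epsilon>: "\<And>i. c i + \<epsilon> < pi\<^sup>2" and ctl: "lq_control (0::real^'n^'n) (mat 1) 1 \<eta> u"
    and \<eta>0: "\<eta> 0 = x" and \<eta>1: "\<eta> 1 = z"
  shows "lq_cost (diag_mat c) 1 (diag_extremal c x z) (diag_extremal' c x z)
           + \<epsilon> / 2 * (\<Sum>i\<in>UNIV. LINT t:{0..1}|lborel. (\<eta> t $ i - diag_extremal c x z t $ i)\<^sup>2)
         \<le> lq_cost (diag_mat c) 1 \<eta> u"
proof -
  let ?h = "\<lambda>i. bvp_solution (c i) (x $ i) (z $ i)"
  let ?h' = "\<lambda>i. bvp_solution' (c i) (x $ i) (z $ i)"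
  have c: "c i < pi\<^sup>2" for i
    using c\<epsilon>[of i] \<open>0 \<le> \<epsilon>\<close> by linarith
  have scalar: "set_integrable lborel {0..1} (\<lambda>t. (u t $ i)\<^sup>2 - c i * (\<eta> t $ i)\<^sup>2)
    \<and> (LINT t:{0..1}|lborel. (?h' i t)\<^sup>2 - c i * (?h i t)\<^sup>2) + \<epsilon> * (LINT t:{0..1}|lborel. (\<eta> t $ i - ?h i t)\<^sup>2)
       \<le> (LINT t:{0..1}|lborel. (u t $ i)\<^sup>2 - c i * (\<eta> t $ i)\<^sup>2)" for i
    using extremal_action_le[OF c\<epsilon> lq_control_identity_component[OF ctl]
        _ _ has_real_derivative_bvp_solution has_real_derivative_bvp_solution']
      \<eta>0 \<eta>1 bvp_solution_0[OF c] bvp_solution_1[OF c] by auto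
  have extremal: "set_integrable lborel {0..1} (\<lambda>t. (?h' i t)\<^sup>2 - c i * (?h i t)\<^sup>2)" for i
    by (intro borel_integrable_atLeastAtMost' continuous_intros
        continuous_on_of_has_real_derivative[OF has_real_derivative_bvp_solution']
        continuous_on_of_has_real_derivative[OF has_real_derivative_bvp_solution])
  have "(\<Sum>i\<in>UNIV. LINT t:{0..1}|lborel. (?h' i t)\<^sup>2 - c i * (?h i t)\<^sup>2)
          + \<epsilon> * (\<Sum>i\<in>UNIV. LINT t:{0..1}|lborel. (\<eta> t $ i - ?h i t)\<^sup>2)
        \<le> (\<Sum>i\<in>UNIV. LINT t:{0..1}|lborel. (u t $ i)\<^sup>2 - c i * (\<eta> t $ i)\<^sup>2)"
    unfolding sum_distrib_left sum.distrib[symmetric] using scalar by (intro sum_mono) blast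
  moreover have "lq_cost (diag_mat c) 1 (diag_extremal c x z) (diag_extremal' c x z)
      = (1/2) * (\<Sum>i\<in>UNIV. LINT t:{0..1}|lborel. (?h' i t)\<^sup>2 - c i * (?h i t)\<^sup>2)"
    using lq_cost_diag_mat[of 1 "diag_extremal' c x z" c "diag_extremal c x z"] extremal
    by (simp add: diag_extremal_def diag_extremal'_def)
  moreover have "lq_cost (diag_mat c) 1 \<eta> u = (1/2) * (\<Sum>i\<in>UNIV. LINT t:{0..1}|lborel. (u t $ i)\<^sup>2 - c i * (\<eta> t $ i)\<^sup>2)"
    using scalar by (intro lq_cost_diag_mat) blast
  ultimately show ?thesis by (simp add: diag_extremal_def)
qed

lemma lq_action_diag_extremal_le:
  "lq_action (0::real^'n^'n) (mat 1) (diag_mat c) 1 (diag_extremal c x z)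
     \<le> ereal (lq_cost (diag_mat c) 1 (diag_extremal c x z) (diag_extremal' c x z))"
  unfolding lq_action_eq_INF_lq_cost
  by (rule INF_lower2[of "diag_extremal' c x z"]) (auto simp: lq_control_diag_extremal)

lemma lq_action_ge_diag_extremal:
  fixes \<eta> :: "real \<Rightarrow> real^'n::finite"
  assumes "0 \<le> \<epsilon>" and "\<And>i. c i + \<epsilon> < pi\<^sup>2" and "\<eta> 0 = x" and "\<eta> 1 = z"
  shows "ereal (lq_cost (diag_mat c) 1 (diag_extremal c x z) (diag_extremal' c x z)
           + \<epsilon> / 2 * (\<Sum>i\<in>UNIV. LINT t:{0..1}|lborel. (\<eta> t $ i - diag_extremal c x z t $ i)\<^sup>2))
         \<le> lq_action (0::real^'n^'n) (mat 1) (diag_mat c) 1 \<eta>"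
  unfolding lq_action_eq_INF_lq_cost
  by (rule INF_greatest) (use lq_cost_ge_diag_extremal[OF assms(1,2) _ assms(3,4)] in auto)

lemma lq_optimal_diag_extremal:
  assumes "\<And>i. c i < pi\<^sup>2"
  shows "lq_optimal (0::real^'n^'n) (mat 1) (diag_mat c) 1 (diag_extremal c x z)"
  unfolding lq_optimal_def lq_admissible_def
proof (intro conjI allI impI)
  show "\<exists>u. lq_control (0::real^'n^'n) (mat 1) 1 (diag_extremal c x z) u"
    using lq_control_diag_extremal by blast
  fix \<eta> :: "real \<Rightarrow> real^'n"
  assume "\<eta> 0 = diag_extremal c x z 0" "\<eta> 1 = diag_extremal c x z 1"
  then have "\<eta> 0 = x" "\<eta> 1 = z" using diag_extremal_0[OF assms] diag_extremal_1[OF assms] by auto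
  from lq_action_ge_diag_extremal[of 0, OF _ _ this] assms
  have "ereal (lq_cost (diag_mat c) 1 (diag_extremal c x z) (diag_extremal' c x z))
          \<le> lq_action (0::real^'n^'n) (mat 1) (diag_mat c) 1 \<eta>" by simp
  with lq_action_diag_extremal_le
  show "lq_action (0::real^'n^'n) (mat 1) (diag_mat c) 1 (diag_extremal c x z)
          \<le> lq_action (0::real^'n^'n) (mat 1) (diag_mat c) 1 \<eta>" by (rule order_trans)
qed

lemma exists_margin_below:
  fixes c :: "'n::finite \<Rightarrow> real"
  assumes "\<And>i. c i < M"
  obtains \<epsilon> where "0 < \<epsilon>" and "\<And>i. c i + \<epsilon> < M"
proof
  define \<epsilon> where "\<epsilon> = (M - Max (range c)) / 2"
  have "Max (range c) \<in> range c" by (rule Max_in) auto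
  then have "Max (range c) < M" using assms by auto
  moreover have "2 * \<epsilon> = M - Max (range c)" by (simp add: \<epsilon>_def)
  ultimately show "0 < \<epsilon>" by linarith
  show "c i + \<epsilon> < M" for i
  proof -
    have "c i \<le> Max (range c)" by (rule Max_ge) auto
    then show ?thesis using \<open>0 < \<epsilon>\<close> \<open>2 * \<epsilon> = M - Max (range c)\<close> by linarith
  qed
qed

lemma lq_optimal_diag_eq_extremal:
  fixes \<eta> :: "real \<Rightarrow> real^'n::finite"
  assumes c: "\<And>i. c i < pi\<^sup>2" and opt: "lq_optimal (0::real^'n^'n) (mat 1) (diag_mat c) 1 \<eta>"
    and t: "t \<in> {0..1}"
  shows "\<eta> t = diag_extremal c (\<eta> 0) (\<eta> 1) t"
proof -
  let ?\<Gamma> = "diag_extremal c (\<eta> 0) (\<eta> 1)"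
  let ?dev = "\<lambda>i. LINT t:{0..1}|lborel. (\<eta> t $ i - ?\<Gamma> t $ i)\<^sup>2"
  obtain \<epsilon> where \<epsilon>: "0 < \<epsilon>" "\<And>i. c i + \<epsilon> < pi\<^sup>2" using exists_margin_below[where c=c and M="pi\<^sup>2"] c by blast
  obtain u where ctl: "lq_control (0::real^'n^'n) (mat 1) 1 \<eta> u"
    using opt unfolding lq_optimal_def lq_admissible_def by blast
  have "lq_action (0::real^'n^'n) (mat 1) (diag_mat c) 1 \<eta> \<le> lq_action (0::real^'n^'n) (mat 1) (diag_mat c) 1 ?\<Gamma>"
    using opt unfolding lq_optimal_def by (simp add: diag_extremal_0[of c, OF c] diag_extremal_1[of c, OF c])
  also have "\<dots> \<le> ereal (lq_cost (diag_mat c) 1 ?\<Gamma> (diag_extremal' c (\<eta> 0) (\<eta> 1)))"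
    by (rule lq_action_diag_extremal_le)
  finally have "ereal (lq_cost (diag_mat c) 1 ?\<Gamma> (diag_extremal' c (\<eta> 0) (\<eta> 1)) + \<epsilon> / 2 * (\<Sum>i\<in>UNIV. ?dev i))
      \<le> ereal (lq_cost (diag_mat c) 1 ?\<Gamma> (diag_extremal' c (\<eta> 0) (\<eta> 1)))"
    using lq_action_ge_diag_extremal[OF less_imp_le[OF \<epsilon>(1)] \<epsilon>(2) refl refl] by (rule order_trans[rotated])
  then have "\<epsilon> / 2 * (\<Sum>i\<in>UNIV. ?dev i) \<le> 0" by simp
  moreover have dev_nonneg: "0 \<le> ?dev i" for i by (rule set_integral_nonneg) simp
  ultimately have "(\<Sum>i\<in>UNIV. ?dev i) = 0"
    using \<epsilon>(1) by (intro antisym sum_nonneg) (auto simp: mult_le_0_iff)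
  then have dev0: "?dev i = 0" for i
    using dev_nonneg by (simp add: sum_nonneg_eq_0_iff)
  have "\<eta> t $ i = ?\<Gamma> t $ i" for i
  proof -
    have "continuous_on {0..1} (\<lambda>t. \<eta> t $ i)"
      by (rule primitive_on_continuous[OF lq_control_identity_component(1)[OF ctl]])
    then have "continuous_on {0..1} (\<lambda>t. (\<eta> t $ i - ?\<Gamma> t $ i)\<^sup>2)"
      by (intro continuous_on_power continuous_on_diff continuous_on_diag_extremal)
    from continuous_nonneg_set_integral_eq_0[OF zero_less_one this _ dev0 t] show ?thesis by simp
  qed
  then show ?thesis by (simp add: vec_eq_iff)
qed

lemma lq_Z_diag_mat:
  fixes x :: "real^'n::finite"
  assumes c: "\<And>i. c i < pi\<^sup>2" and \<tau>: "\<tau> \<in> {0..1}"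
  shows "lq_Z (0::real^'n^'n) (mat 1) (diag_mat c) 1 \<tau> x F = (\<lambda>z. diag_extremal c x z \<tau>) ` F"
proof (intro set_eqI iffI)
  fix w assume "w \<in> lq_Z (0::real^'n^'n) (mat 1) (diag_mat c) 1 \<tau> x F"
  then obtain \<gamma> where "w = \<gamma> \<tau>" and "lq_optimal (0::real^'n^'n) (mat 1) (diag_mat c) 1 \<gamma>"
    and "\<gamma> 0 = x" and "\<gamma> 1 \<in> F"
    unfolding lq_Z_def by blast
  moreover have "\<gamma> \<tau> = diag_extremal c (\<gamma> 0) (\<gamma> 1) \<tau>"
    by (rule lq_optimal_diag_eq_extremal[OF c \<open>lq_optimal _ _ _ _ \<gamma>\<close> \<tau>])
  ultimately show "w \<in> (\<lambda>z. diag_extremal c x z \<tau>) ` F" by blast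
next
  fix w assume "w \<in> (\<lambda>z. diag_extremal c x z \<tau>) ` F"
  then obtain z where "w = diag_extremal c x z \<tau>" and "z \<in> F" by blast
  then show "w \<in> lq_Z (0::real^'n^'n) (mat 1) (diag_mat c) 1 \<tau> x F"
    unfolding lq_Z_def mem_Collect_eq
    using lq_optimal_diag_extremal[of c, OF c] diag_extremal_0[of c, OF c] diag_extremal_1[of c, OF c]
    by (intro exI[of _ "diag_extremal c x z"]) auto
qed

lemma diag_extremal_affine:
  "(\<lambda>z. diag_extremal c x z \<tau>) = (\<lambda>z. diag_extremal c x 0 \<tau> + (\<chi> i. sn (c i) \<tau> / sn (c i) 1 * z $ i))"
  unfolding diag_extremal_def bvp_solution_def by (simp add: fun_eq_iff vec_eq_iff add_divide_distrib)

lemma measure_lq_Z_diag_mat: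
  fixes x :: "real^'n::finite"
  assumes c: "\<And>i. c i < pi\<^sup>2" and \<tau>: "\<tau> \<in> {0..1}" and S: "S \<in> lmeasurable"
  shows "measure lebesgue (lq_Z (0::real^'n^'n) (mat 1) (diag_mat c) 1 \<tau> x S)
           = (\<Prod>i\<in>UNIV. sn (c i) \<tau> / sn (c i) 1) * measure lebesgue S"
proof -
  let ?m = "\<lambda>i. sn (c i) \<tau> / sn (c i) 1"
  have "lq_Z (0::real^'n^'n) (mat 1) (diag_mat c) 1 \<tau> x S
      = (+) (diag_extremal c x 0 \<tau>) ` (\<lambda>z. \<chi> i. ?m i * z $ i) ` S"
    unfolding lq_Z_diag_mat[of c, OF c \<tau>] diag_extremal_affine image_image ..
  then have "measure lebesgue (lq_Z (0::real^'n^'n) (mat 1) (diag_mat c) 1 \<tau> x S)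
      = measure lebesgue ((\<lambda>z. \<chi> i. ?m i * z $ i) ` S)"
    by (simp only: measure_translation)
  also have "\<dots> = \<bar>\<Prod>i\<in>UNIV. ?m i\<bar> * measure lebesgue S"
    by (rule measure_stretch[OF S])
  also have "\<bar>\<Prod>i\<in>UNIV. ?m i\<bar> = (\<Prod>i\<in>UNIV. ?m i)"
    using sn_ratio_nonneg[OF c \<tau>] by (simp add: prod_nonneg)
  finally show ?thesis .
qed

lemma lq_distortion_diag_mat:
  fixes x y :: "real^'n::finite"
  assumes c: "\<And>i. c i < pi\<^sup>2" and \<tau>: "\<tau> \<in> {0..1}"
  shows "lq_distortion (0::real^'n^'n) (mat 1) (diag_mat c) 1 \<tau> x y = ereal (\<Prod>i\<in>UNIV. sn (c i) \<tau> / sn (c i) 1)"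
proof -
  let ?m = "\<Prod>i\<in>UNIV. sn (c i) \<tau> / sn (c i) 1"
  have ratio: "measure lebesgue (lq_Z (0::real^'n^'n) (mat 1) (diag_mat c) 1 \<tau> x (ball y r)) / measure lebesgue (ball y r)
      = ?m" if "0 < r" for r
    using measure_lq_Z_diag_mat[of c, OF c \<tau> lmeasurable_ball] content_ball_pos[OF that]
    by (simp add: measure_completion)
  have "\<forall>\<^sub>F r in at_right 0.
      ereal (measure lebesgue (lq_Z (0::real^'n^'n) (mat 1) (diag_mat c) 1 \<tau> x (ball y r)) / measure lebesgue (ball y r))
        = ereal ?m"
    using eventually_at_right_less[of 0] by eventually_elim (simp only: ratio)
  then have "lq_distortion (0::real^'n^'n) (mat 1) (diag_mat c) 1 \<tau> x y = Limsup (at_right (0::real)) (\<lambda>r. ereal ?m)"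
    unfolding lq_distortion_def by (rule Limsup_eq)
  then show ?thesis by (simp add: Limsup_const)
qed

lemma lq_conjugate_time_diag_mat:
  fixes c :: "'n::finite \<Rightarrow> real"
  assumes "lq_conjugate_time (0::real^'n^'n) (mat 1) (diag_mat c) t"
  obtains i where "0 < c i" and "pi \<le> sqrt (c i) * t"
proof (rule ccontr)
  assume "\<not> thesis"
  with that have before_pi: "sqrt (c i) * t < pi" if "0 < c i" for i
    using \<open>0 < c i\<close> by (meson not_le)
  obtain p x where ham: "lq_hamiltonian_solution (0::real^'n^'n) (mat 1) (diag_mat c) p x"
    and nontrivial: "\<not> (\<forall>s. p s = 0 \<and> x s = 0)" and x0: "x 0 = 0" and xt: "x t = 0" and t: "0 < t"
    using assms unfolding lq_conjugate_time_def by blast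
  have "transpose (0::real^'n^'n) = 0" by (simp add: transpose_def vec_eq_iff)
  then have hp: "(p has_vector_derivative - (diag_mat c *v x s)) (at s)"
    and hx: "(x has_vector_derivative p s) (at s)" for s
    using ham unfolding lq_hamiltonian_solution_def by simp_all
  have "x s $ i = 0 \<and> p s $ i = 0" for s i
  proof -
    have X: "((\<lambda>s. x s $ i) has_real_derivative p s $ i) (at s)"
      and P: "((\<lambda>s. p s $ i) has_real_derivative - c i * x s $ i) (at s)" for s
      using bounded_linear.has_vector_derivative[OF bounded_linear_vec_nth hx[of s], of i]
        bounded_linear.has_vector_derivative[OF bounded_linear_vec_nth hp[of s], of i]
      by (simp_all add: has_real_derivative_iff_has_vector_derivative)
    have "0 < sn (c i) t"
      using before_pi t by (intro sn_pos) auto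
    moreover have "p 0 $ i * sn (c i) t = 0"
      using jacobi_solution_eq(1)[OF X P, of t] x0 xt by simp
    ultimately have "p 0 $ i = 0" by simp
    then show ?thesis
      using jacobi_solution_eq[OF X P, of s] x0 by simp
  qed
  then show False using nontrivial by (simp add: vec_eq_iff)
qed

lemma lq_first_conjugate_time_diag_mat_gt_1:
  fixes c :: "'n::finite \<Rightarrow> real"
  assumes c: "\<And>i. c i < pi\<^sup>2"
  shows "1 < lq_first_conjugate_time (0::real^'n^'n) (mat 1) (diag_mat c)"
proof -
  define T where "T = Min (insert 2 ((\<lambda>i. pi / sqrt (c i)) ` {i. 0 < c i}))"
  have "1 < pi / sqrt (c i)" if "0 < c i" for i
    using sqrt_mult_less_pi[OF c, of 1] that by simp
  then have "1 < T" unfolding T_def by (subst Min_gr_iff) auto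
  then have "(1::ereal) < ereal T" by simp
  moreover have "ereal T \<le> lq_first_conjugate_time (0::real^'n^'n) (mat 1) (diag_mat c)"
    unfolding lq_first_conjugate_time_def
  proof (rule Inf_greatest, clarify)
    fix t assume "lq_conjugate_time (0::real^'n^'n) (mat 1) (diag_mat c) t"
    then obtain i where "0 < c i" and "pi \<le> sqrt (c i) * t"
      by (rule lq_conjugate_time_diag_mat)
    then have "pi / sqrt (c i) \<le> t" by (simp add: divide_le_eq mult.commute)
    moreover have "T \<le> pi / sqrt (c i)" unfolding T_def using \<open>0 < c i\<close> by (intro Min_le) auto
    ultimately show "ereal T \<le> ereal t" by simp
  qed
  ultimately show ?thesis by (rule less_le_trans)
qed

section \<open>Space forms\<close>

lemma scaled_curvature_less_pi_sq:
  fixes d k m :: real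
  assumes m: "0 < m" and d: "0 \<le> d" and bound: "0 < k \<Longrightarrow> d < pi * sqrt (m / k)"
  shows "d\<^sup>2 * k / m < pi\<^sup>2"
proof (cases "0 < k")
  case True
  have "d\<^sup>2 < (pi * sqrt (m / k))\<^sup>2"
    using bound[OF True] d by (intro power_strict_mono) auto
  also have "\<dots> = pi\<^sup>2 * (m / k)"
    using m True by (simp add: power_mult_distrib)
  finally show ?thesis using m True by (simp add: field_simps)
next
  case False
  then have "d\<^sup>2 * k / m \<le> 0" using m by (intro divide_nonpos_pos mult_nonneg_nonpos) auto
  moreover have "0 < pi\<^sup>2" by simp
  ultimately show ?thesis by linarith
qed

lemma space_form_distortion_eq_sn:
  fixes k d \<tau> :: real
  assumes n: "2 \<le> n" and d: "0 \<le> d"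
  defines "K \<equiv> d\<^sup>2 * k / (real n - 1)"
  shows "space_form_distortion n k d \<tau> = \<tau> * (sn K \<tau> / sn K 1) ^ (n - 1)"
proof -
  define \<theta> where "\<theta> = sqrt (\<bar>k\<bar> / (real n - 1)) * d"
  have m: "0 < real n - 1" using n by simp
  have "\<bar>K\<bar> = d\<^sup>2 * (\<bar>k\<bar> / (real n - 1))"
    using m by (simp add: K_def abs_mult abs_divide)
  then have "sqrt \<bar>K\<bar> = sqrt (d\<^sup>2) * sqrt (\<bar>k\<bar> / (real n - 1))"
    by (simp only: real_sqrt_mult)
  then have \<theta>: "sqrt \<bar>K\<bar> = \<theta>"
    using d by (simp add: \<theta>_def)
  have sf: "space_form_distortion n k d \<tau> =
     (if k = 0 \<or> d = 0 then \<tau> ^ n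
      else if k > 0 then \<tau> * (sin (\<tau> * \<theta>) / sin \<theta>) ^ (n - 1)
      else \<tau> * (sinh (\<tau> * \<theta>) / sinh \<theta>) ^ (n - 1))"
    unfolding space_form_distortion_def \<theta>_def Let_def ..
  consider "k = 0 \<or> d = 0" | "0 < k" "0 < d" | "k < 0" "0 < d" using d by linarith
  then show ?thesis
  proof cases
    case 1
    then have "K = 0" by (auto simp: K_def)
    then show ?thesis using 1 n by (simp add: sf power_Suc[symmetric])
  next
    case 2
    then have "0 < K" using m by (simp add: K_def)
    then show ?thesis using 2 \<theta> by (simp add: sf sn_ratio_pos)
  next
    case 3
    then have "K < 0" using m by (simp add: K_def mult_pos_neg divide_neg_pos)
    then show ?thesis using 3 \<theta> by (simp add: sf sn_ratio_neg)
  qed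
qed

theorem proposition1p10:
  fixes k d :: real and j0 :: "'n::finite"
  assumes "CARD('n) \<ge> 2"
    and "d \<ge> 0"
    and "k > 0 \<Longrightarrow> d < pi * sqrt ((real CARD('n) - 1) / k)"
  defines "K \<equiv> d\<^sup>2 * k / (real CARD('n) - 1)"
  defines "A \<equiv> (0 :: real^'n^'n)"
    and "B \<equiv> (mat 1 :: real^'n^'n)"
    and "Q \<equiv> (\<chi> i j. if i = j \<and> i \<noteq> j0 then K else 0 :: real^'n^'n)"
  shows "1 < lq_first_conjugate_time A B Q \<and>
         (\<forall>\<tau>\<in>{0..1}. \<forall>x y.
            lq_distortion A B Q 1 \<tau> x y = ereal (space_form_distortion CARD('n) k d \<tau>))"
proof -
  define c where "c i = (if i = j0 then 0 else K)" for i
  have Q: "Q = diag_mat c" by (simp add: Q_def diag_mat_def c_def vec_eq_iff)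
  have "K < pi\<^sup>2"
    unfolding K_def using assms(1-3) by (intro scaled_curvature_less_pi_sq) auto
  then have c: "c i < pi\<^sup>2" for i by (simp add: c_def)
  have "(\<Prod>i\<in>UNIV. sn (c i) \<tau> / sn (c i) 1) = \<tau> * (sn K \<tau> / sn K 1) ^ (CARD('n) - 1)" for \<tau>
  proof -
    have "(\<Prod>i\<in>UNIV. sn (c i) \<tau> / sn (c i) 1) = \<tau> * (\<Prod>i\<in>UNIV - {j0}. sn K \<tau> / sn K 1)"
      by (subst prod.remove[of _ j0]) (auto simp: c_def intro!: prod.cong)
    then show ?thesis by (simp add: card_Diff_singleton)
  qed
  then show ?thesis
    unfolding A_def B_def Q
    using lq_first_conjugate_time_diag_mat_gt_1[of c, OF c] lq_distortion_diag_mat[of c, OF c]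
      space_form_distortion_eq_sn[OF assms(1,2), of k, folded K_def]
    by simp
qed

end
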